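(* Let $G$ be an edge-colored graph of order $n\ge 1$. If $e(G)+c(G)\geq \binom{n+1}{2}-1$ and $G$ contains no rainbow triangle, then $G$ belongs to $\mathcal{G}_0$.
   Context: An edge-colored graph is a finite simple graph $G$ with a map $C:E(G)\to\mathbb{N}$. $e(G)=|E(G)|$, $c(G)$ is the number of distinct colors appearing on $E(G)$. A subgraph is rainbow if all its edges have distinct colors, monochromatic if all its edges have the same color. For disjoint $S,S'\subseteq V(G)$, $G[S,S']$ is the bipartite subgraph with classes $S,S'$ and all edges of $G$ between $S$ and $S'$. The family $\mathcal{G}_0$ of edge-colored complete graphs is defined recursively: $K_1\in\mathcal{G}_0$; an edge-colored complete graph $G$ of order $n\ge 2$ belongs to $\mathcal{G}_0$ iff $c(G)=n-1$ and there is a partition $V(G)=V_1\cup V_2$ into nonempty sets such that $G[V_1,V_2]$ is monochromatic and $G[V_i]\in\mathcal{G}_0$ for $i=1,2$. *)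

theory Defs
  imports Main
begin

text \<open>An edge-colored graph is given by a finite vertex set V, an edge set E of
2-element subsets of V, and a colouring C : edges -> nat (given as a total
function on vertex sets; only its values on E matter).\<close>

definition all_edges :: "'a set \<Rightarrow> 'a set set" where
  "all_edges V = {e. e \<subseteq> V \<and> card e = 2}"

definition is_graph :: "'a set \<Rightarrow> 'a set set \<Rightarrow> bool" where
  "is_graph V E \<longleftrightarrow> finite V \<and> E \<subseteq> all_edges V"

definition num_colors :: "'a set set \<Rightarrow> ('a set \<Rightarrow> nat) \<Rightarrow> nat" where
  "num_colors E C = card (C ` E)"

definition has_rainbow_triangle :: "'a set set \<Rightarrow> ('a set \<Rightarrow> nat) \<Rightarrow> bool" where
  "has_rainbow_triangle E C \<longleftrightarrow>
     (\<exists>x y z. x \<noteq> y \<and> y \<noteq> z \<and> x \<noteq> z \<and>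
        {x,y} \<in> E \<and> {y,z} \<in> E \<and> {x,z} \<in> E \<and>
        C {x,y} \<noteq> C {y,z} \<and> C {y,z} \<noteq> C {x,z} \<and> C {x,y} \<noteq> C {x,z})"

text \<open>The family G_0 of edge-colored complete graphs: G0 V C means the complete
graph on V with colouring C belongs to G_0.\<close>
inductive G0 :: "'a set \<Rightarrow> ('a set \<Rightarrow> nat) \<Rightarrow> bool" where
  single: "G0 {v} C"
| split: "\<lbrakk> finite V; card V \<ge> 2;
            num_colors (all_edges V) C = card V - 1;
            V1 \<union> V2 = V; V1 \<inter> V2 = {}; V1 \<noteq> {}; V2 \<noteq> {};
            \<exists>c. \<forall>x\<in>V1. \<forall>y\<in>V2. C {x,y} = c;
            G0 V1 C; G0 V2 C \<rbrakk> \<Longrightarrow> G0 V C"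

end

theory Submission
  imports Defs
begin

text \<open>Remove a vertex \<open>v\<close> of minimum degree. Every colour seen only at \<open>v\<close> has a
  representative neighbour of \<open>v\<close>, and these representatives are pairwise non-adjacent, since an
  edge between two of them would close a rainbow triangle. Hence the degree of \<open>v\<close> plus the number
  of such colours is at most \<open>n\<close>, and induction gives \<open>e(G) + c(G) \<le> (n+1 choose 2) - 1\<close>, with
  equality only for complete graphs with \<open>n - 1\<close> colours. In such an extremal graph a colour private
  to a vertex produces a monochromatic cut whose two sides are again extremal, so splitting along
  these cuts builds the graph as a member of \<open>G\<^sub>0\<close>.\<close>

lemma doubleton_in_all_edges_iff [simp]:
  "{x, y} \<in> all_edges V \<longleftrightarrow> x \<in> V \<and> y \<in> V \<and> x \<noteq> y"
  unfolding all_edges_def by (auto simp: card_2_iff)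

lemma all_edgesE:
  assumes "e \<in> all_edges V"
  obtains x y where "e = {x, y}" "x \<noteq> y" "x \<in> V" "y \<in> V"
  using assms unfolding all_edges_def by (auto simp: card_2_iff)

lemma all_edges_mono: "A \<subseteq> B \<Longrightarrow> all_edges A \<subseteq> all_edges B"
  unfolding all_edges_def by auto

lemma all_edges_singleton [simp]: "all_edges {v} = {}"
  unfolding all_edges_def by (auto simp: subset_singleton_iff)

lemma finite_all_edges: "finite V \<Longrightarrow> finite (all_edges V)"
  unfolding all_edges_def by (rule finite_subset[of _ "Pow V"]) auto

lemma card_all_edges: "finite V \<Longrightarrow> card (all_edges V) = card V choose 2"
  unfolding all_edges_def by (rule n_subsets)

definition incident_edges :: "'a set set \<Rightarrow> 'a \<Rightarrow> 'a set set" where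
  "incident_edges E v = {e \<in> E. v \<in> e}"

lemma incident_edges_all_edges:
  "v \<in> V \<Longrightarrow> incident_edges (all_edges V) v = (\<lambda>y. {v, y}) ` (V - {v})"
  unfolding incident_edges_def by (auto elim!: all_edgesE)

lemma card_incident_edges_all_edges:
  assumes "finite V" "v \<in> V"
  shows "card (incident_edges (all_edges V) v) = card V - 1"
proof -
  have "inj_on (\<lambda>y. {v, y}) (V - {v})"
    by (rule inj_onI) (auto simp: doubleton_eq_iff)
  then show ?thesis
    using assms by (simp add: incident_edges_all_edges card_image)
qed

lemma all_edges_remove_vertex:
  "all_edges V = incident_edges (all_edges V) v \<union> all_edges (V - {v})"
  unfolding incident_edges_def all_edges_def by auto

lemma card_incident_edges_le_independent:
  assumes "finite V" "E \<subseteq> all_edges V" "x \<in> X"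
    and independent: "\<forall>y\<in>X. y \<noteq> x \<longrightarrow> {x, y} \<notin> E"
  shows "card (incident_edges E x) \<le> card (V - X)"
proof -
  have "incident_edges E x \<subseteq> (\<lambda>y. {x, y}) ` (V - X)"
  proof
    fix e assume e: "e \<in> incident_edges E x"
    then obtain y where "e = {x, y}" "y \<in> V" "y \<noteq> x"
      using assms(2) unfolding incident_edges_def by (auto elim!: all_edgesE)
    with e independent show "e \<in> (\<lambda>y. {x, y}) ` (V - X)"
      unfolding incident_edges_def by auto
  qed
  then have "card (incident_edges E x) \<le> card ((\<lambda>y. {x, y}) ` (V - X))"
    using assms(1) by (intro card_mono) auto
  also have "\<dots> \<le> card (V - X)"
    by (rule card_image_le) (use assms(1) in simp)
  finally show ?thesis .
qed

lemma card_incident_edges_le: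
  assumes "finite V" "E \<subseteq> all_edges V" "x \<in> V"
  shows "card (incident_edges E x) \<le> card V - 1"
  using card_incident_edges_le_independent[OF assms(1,2), of x "{x}"] assms(1,3) by simp

lemma has_rainbow_triangle_mono:
  "E1 \<subseteq> E2 \<Longrightarrow> has_rainbow_triangle E1 C \<Longrightarrow> has_rainbow_triangle E2 C"
  unfolding has_rainbow_triangle_def by blast

lemma rainbow_free_all_edges_subset:
  "\<not> has_rainbow_triangle (all_edges V) C \<Longrightarrow> W \<subseteq> V \<Longrightarrow> \<not> has_rainbow_triangle (all_edges W) C"
  using has_rainbow_triangle_mono all_edges_mono by metis

lemma rainbow_free_triangle:
  assumes "\<not> has_rainbow_triangle E C"
    and "x \<noteq> y" "y \<noteq> z" "x \<noteq> z" "{x, y} \<in> E" "{y, z} \<in> E" "{x, z} \<in> E"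
    and "C {x, y} \<noteq> C {y, z}" "C {x, y} \<noteq> C {x, z}"
  shows "C {y, z} = C {x, z}"
  using assms unfolding has_rainbow_triangle_def by blast

definition private_colours :: "'a set set \<Rightarrow> ('a set \<Rightarrow> nat) \<Rightarrow> 'a \<Rightarrow> nat set" where
  "private_colours E C v = C ` incident_edges E v - C ` {e \<in> E. v \<notin> e}"

lemma private_colours_independent_representatives:
  assumes "E \<subseteq> all_edges V" "\<not> has_rainbow_triangle E C"
  obtains X where "X \<subseteq> V - {v}"
    "card X = card (private_colours E C v)"
    "\<forall>x\<in>X. \<forall>y\<in>X. x \<noteq> y \<longrightarrow> {x, y} \<notin> E"
proof -
  define K where "K = private_colours E C v"
  have "\<exists>y. y \<in> V - {v} \<and> {v, y} \<in> E \<and> C {v, y} = c" if c: "c \<in> K" for c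
  proof -
    obtain e where e: "e \<in> E" "v \<in> e" "C e = c"
      using c unfolding K_def private_colours_def incident_edges_def by auto
    with assms(1) obtain y where "e = {v, y}" "y \<in> V - {v}"
      by (auto elim!: all_edgesE)
    with e show ?thesis by blast
  qed
  then obtain g where g: "\<And>c. c \<in> K \<Longrightarrow> g c \<in> V - {v} \<and> {v, g c} \<in> E \<and> C {v, g c} = c"
    by metis
  have "inj_on g K"
    by (rule inj_onI) (metis g)
  then have "card (g ` K) = card K"
    by (rule card_image)
  moreover have "{x, y} \<notin> E" if xy_in: "x \<in> g ` K" "y \<in> g ` K" and "x \<noteq> y" for x y
  proof
    assume xy: "{x, y} \<in> E"
    obtain c1 c2 where c: "c1 \<in> K" "c2 \<in> K" "x = g c1" "y = g c2"
      using xy_in by blast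
    with g have "{x, y} \<in> {e \<in> E. v \<notin> e}"
      using xy by auto
    then have "C {x, y} \<noteq> c1" "C {x, y} \<noteq> c2"
      using c(1,2) unfolding K_def private_colours_def by (blast intro: imageI)+
    moreover have "c1 \<noteq> c2"
      using c \<open>x \<noteq> y\<close> by auto
    ultimately have "has_rainbow_triangle E C"
      unfolding has_rainbow_triangle_def using g[OF c(1)] g[OF c(2)] c xy \<open>x \<noteq> y\<close>
      by (intro exI[of _ v] exI[of _ x] exI[of _ y]) auto
    with assms(2) show False ..
  qed
  ultimately show thesis
    using that[of "g ` K"] g unfolding K_def by blast
qed

lemma min_degree_plus_private_colours_le:
  assumes "finite V" "E \<subseteq> all_edges V" "\<not> has_rainbow_triangle E C" "v \<in> V"
    and min_degree: "\<forall>x\<in>V. card (incident_edges E v) \<le> card (incident_edges E x)"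
  shows "card (incident_edges E v) + card (private_colours E C v) \<le> card V"
proof -
  obtain X where X: "X \<subseteq> V - {v}" "card X = card (private_colours E C v)"
    "\<forall>x\<in>X. \<forall>y\<in>X. x \<noteq> y \<longrightarrow> {x, y} \<notin> E"
    using private_colours_independent_representatives[OF assms(2,3)] by blast
  have "finite X"
    using X(1) assms(1) finite_subset by blast
  show ?thesis
  proof (cases "X = {}")
    case True
    with X(2) \<open>finite X\<close> card_incident_edges_le[OF assms(1,2,4)] show ?thesis
      by simp
  next
    case False
    then obtain x where "x \<in> X"
      by blast
    with X(1) min_degree have "card (incident_edges E v) \<le> card (incident_edges E x)"
      by auto
    also have "\<dots> \<le> card (V - X)"
      using X(3) \<open>x \<in> X\<close> by (intro card_incident_edges_le_independent[OF assms(1,2)]) auto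
    also have "\<dots> = card V - card X"
      using X(1) \<open>finite X\<close> by (subst card_Diff_subset) auto
    finally have "card (incident_edges E v) \<le> card V - card X" .
    moreover have "card X \<le> card V"
      using X(1) by (intro card_mono[OF assms(1)]) auto
    ultimately show ?thesis
      using X(2) by linarith
  qed
qed

lemma card_private_colours_le_one:
  assumes "E \<subseteq> all_edges V" "\<not> has_rainbow_triangle E C"
    and "{e \<in> E. v \<notin> e} = all_edges (V - {v})"
  shows "card (private_colours E C v) \<le> 1"
proof -
  obtain X where X: "X \<subseteq> V - {v}" "card X = card (private_colours E C v)"
    "\<forall>x\<in>X. \<forall>y\<in>X. x \<noteq> y \<longrightarrow> {x, y} \<notin> E"
    using private_colours_independent_representatives[OF assms(1,2)] by blast
  have "x = y" if "x \<in> X" "y \<in> X" for x y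
  proof (rule ccontr)
    assume "x \<noteq> y"
    with that X(1) have "{x, y} \<in> {e \<in> E. v \<notin> e}"
      using assms(3) by auto
    with X(3) that \<open>x \<noteq> y\<close> show False
      by blast
  qed
  then have "card X \<le> 1"
    using card_le_Suc0_iff_eq[of X] card.infinite[of X] by fastforce
  with X(2) show ?thesis
    by simp
qed

lemma complete_if_full_degree:
  assumes "finite V" "E \<subseteq> all_edges V" "v \<in> V"
    and "card (incident_edges E v) = card V - 1" "{e \<in> E. v \<notin> e} = all_edges (V - {v})"
  shows "E = all_edges V"
proof -
  have "incident_edges E v = incident_edges (all_edges V) v"
    using assms card_incident_edges_all_edges[OF assms(1,3)]
    by (intro card_subset_eq) (auto simp: incident_edges_def finite_all_edges)
  moreover have "E = incident_edges E v \<union> {e \<in> E. v \<notin> e}"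
    unfolding incident_edges_def by auto
  ultimately show ?thesis
    using all_edges_remove_vertex[of V v] assms(5) by simp
qed

lemma edges_plus_colours_bound:
  assumes "finite V" "V \<noteq> {}" "E \<subseteq> all_edges V" "\<not> has_rainbow_triangle E C"
  shows "card E + card (C ` E) + 1 \<le> Suc (card V) choose 2 \<and>
    (card E + card (C ` E) + 1 = Suc (card V) choose 2 \<longrightarrow> E = all_edges V)"
  using assms
proof (induction "card V" arbitrary: V E rule: less_induct)
  case less
  show ?case
  proof (cases "card V = 1")
    case True
    then obtain v where "V = {v}"
      by (auto simp: card_1_singleton_iff)
    with less.prems(3) show ?thesis
      by (simp add: numeral_2_eq_2)
  next
    case False
    define n where "n = card V"
    have "2 \<le> n"
      using False less.prems(1,2) card_gt_0_iff[of V] unfolding n_def by linarith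
    obtain v where v: "v \<in> V" "\<forall>x\<in>V. card (incident_edges E v) \<le> card (incident_edges E x)"
      using ex_has_least_nat[of "\<lambda>x. x \<in> V" _ "card \<circ> incident_edges E"] less.prems(2) by fastforce
    define E' where "E' = {e \<in> E. v \<notin> e}"
    define d where "d = card (incident_edges E v)"
    define K where "K = private_colours E C v"
    have "\<not> has_rainbow_triangle E' C"
      using less.prems(4) has_rainbow_triangle_mono[of E' E C] unfolding E'_def by blast
    have "E' \<subseteq> all_edges (V - {v})" "card (V - {v}) = n - 1"
      using less.prems(1,3) v(1) unfolding E'_def n_def all_edges_def by auto
    have IH: "card E' + card (C ` E') + 1 \<le> n choose 2 \<and>
      (card E' + card (C ` E') + 1 = n choose 2 \<longrightarrow> E' = all_edges (V - {v}))"
    proof -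
      have "card (V - {v}) < card V" "finite (V - {v})" "Suc (n - 1) = n"
        using \<open>card (V - {v}) = n - 1\<close> \<open>2 \<le> n\<close> less.prems(1) unfolding n_def by auto
      moreover have "V - {v} \<noteq> {}"
        using \<open>card (V - {v}) = n - 1\<close> \<open>2 \<le> n\<close> by (intro notI) simp
      ultimately show ?thesis
        using less.hyps[of "V - {v}" E'] \<open>E' \<subseteq> _\<close> \<open>\<not> has_rainbow_triangle E' C\<close>
          \<open>card (V - {v}) = n - 1\<close> by simp
    qed
    have E_split: "E = incident_edges E v \<union> E'"
      unfolding incident_edges_def E'_def by auto
    have "finite E"
      using less.prems(1,3) finite_all_edges finite_subset by blast
    have card_E: "card E = card E' + d"
    proof -
      have "card (incident_edges E v \<union> E') = d + card E'"
        using \<open>finite E\<close> unfolding d_def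
        by (intro card_Un_disjoint) (auto simp: E'_def incident_edges_def)
      with E_split show ?thesis
        by simp
    qed
    have card_colours: "card (C ` E) \<le> card (C ` E') + card K"
    proof -
      have "K = C ` incident_edges E v - C ` E'"
        unfolding K_def private_colours_def E'_def ..
      then have "C ` E = C ` E' \<union> K"
        by (subst E_split) auto
      then show ?thesis
        by (simp add: card_Un_le)
    qed
    have d_K: "d + card K \<le> n"
      using min_degree_plus_private_colours_le[OF less.prems(1,3,4) v] unfolding d_def K_def n_def .
    have Suc_n: "Suc n choose 2 = (n choose 2) + n"
      by (simp add: numeral_2_eq_2)
    have "E = all_edges V" if "card E + card (C ` E) + 1 = Suc n choose 2"
    proof -
      have "E' = all_edges (V - {v})" "d + card K = n"
        using IH card_E card_colours d_K that Suc_n by linarith+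
      moreover have "card K \<le> 1"
        using card_private_colours_le_one[OF less.prems(3,4)] \<open>E' = all_edges (V - {v})\<close>
        unfolding K_def E'_def by simp
      ultimately have "d = card V - 1"
        using card_incident_edges_le[OF less.prems(1,3) v(1)] unfolding d_def n_def by linarith
      then show ?thesis
        using complete_if_full_degree[OF less.prems(1,3) v(1)] \<open>E' = all_edges (V - {v})\<close>
        unfolding d_def E'_def by blast
    qed
    moreover have "card E + card (C ` E) + 1 \<le> Suc n choose 2"
      using IH card_E card_colours d_K Suc_n by linarith
    ultimately show ?thesis
      unfolding n_def by blast
  qed
qed

lemma card_colours_le:
  assumes "finite V" "V \<noteq> {}" "\<not> has_rainbow_triangle (all_edges V) C"
  shows "card (C ` all_edges V) \<le> card V - 1"
  using conjunct1[OF edges_plus_colours_bound[OF assms(1,2) order_refl assms(3)]]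
  by (simp add: card_all_edges[OF assms(1)] numeral_2_eq_2)

lemma all_edges_Un_cases:
  assumes "e \<in> all_edges (V1 \<union> V2)"
  obtains "e \<in> all_edges V1" | "e \<in> all_edges V2"
    | x y where "x \<in> V1 - V2" "y \<in> V2 - V1" "e = {x, y}"
  using assms by (elim all_edgesE) (auto simp: insert_commute)

lemma colours_Un_subset:
  assumes "\<forall>x\<in>V1 - V2. \<forall>y\<in>V2 - V1. C {x, y} \<in> S"
  shows "C ` all_edges (V1 \<union> V2) \<subseteq> C ` all_edges V1 \<union> C ` all_edges V2 \<union> S"
proof
  fix c assume "c \<in> C ` all_edges (V1 \<union> V2)"
  then obtain e where e: "e \<in> all_edges (V1 \<union> V2)" and "c = C e"
    by blast
  from e show "c \<in> C ` all_edges V1 \<union> C ` all_edges V2 \<union> S"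
    by (cases rule: all_edges_Un_cases) (use assms \<open>c = C e\<close> in auto)
qed

lemma card_colours_tight_parts:
  assumes "finite V" "\<not> has_rainbow_triangle (all_edges V) C"
    and "card (C ` all_edges V) = card V - 1"
    and "P \<subseteq> V" "Q \<subseteq> V" "P \<noteq> {}" "Q \<noteq> {}" "finite S"
    and "C ` all_edges V \<subseteq> C ` all_edges P \<union> C ` all_edges Q \<union> S"
    and "card P + card Q + card S \<le> card V + 1"
  shows "card (C ` all_edges P) = card P - 1" "card (C ` all_edges Q) = card Q - 1"
proof -
  have finite: "finite P" "finite Q"
    using assms(1,4,5) finite_subset by auto
  have "card (C ` all_edges V) \<le> card (C ` all_edges P \<union> C ` all_edges Q \<union> S)"
    using assms(8,9) finite by (intro card_mono) (simp_all add: finite_all_edges)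
  also have "\<dots> \<le> card (C ` all_edges P) + card (C ` all_edges Q) + card S"
    using card_Un_le[of "C ` all_edges P" "C ` all_edges Q"]
      card_Un_le[of "C ` all_edges P \<union> C ` all_edges Q" S] by simp
  finally have "card V - 1 \<le> card (C ` all_edges P) + card (C ` all_edges Q) + card S"
    using assms(3) by simp
  moreover have "card (C ` all_edges P) \<le> card P - 1" "card (C ` all_edges Q) \<le> card Q - 1"
    using card_colours_le[OF finite(1) assms(6) rainbow_free_all_edges_subset[OF assms(2,4)]]
      card_colours_le[OF finite(2) assms(7) rainbow_free_all_edges_subset[OF assms(2,5)]] .
  moreover have "0 < card P" "0 < card Q"
    using finite assms(6,7) by (simp_all add: card_gt_0_iff)
  ultimately show "card (C ` all_edges P) = card P - 1" "card (C ` all_edges Q) = card Q - 1"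
    using assms(10) by linarith+
qed

lemma private_colour_exists:
  assumes "finite V" "2 \<le> card V" "\<not> has_rainbow_triangle (all_edges V) C"
    and "card (C ` all_edges V) = card V - 1" and "v \<in> V"
  obtains a where "a \<in> C ` all_edges V" "\<And>e. e \<in> all_edges V \<Longrightarrow> C e = a \<Longrightarrow> v \<in> e"
proof -
  have "card (V - {v}) = card V - 1"
    using assms(1,5) by simp
  then have "V - {v} \<noteq> {}"
    using assms(2) by (intro notI) simp
  then have "card (C ` all_edges (V - {v})) \<le> card (V - {v}) - 1"
    using assms(1) by (intro card_colours_le rainbow_free_all_edges_subset[OF assms(3)]) auto
  with \<open>card (V - {v}) = card V - 1\<close> assms(2,4)
  have "card (C ` all_edges (V - {v})) < card (C ` all_edges V)"
    by linarith
  then obtain a where a: "a \<in> C ` all_edges V" "a \<notin> C ` all_edges (V - {v})"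
    using card_mono[OF finite_imageI[OF finite_all_edges], of "V - {v}" "C ` all_edges V" C]
      assms(1) by (auto simp: not_le[symmetric])
  moreover have "v \<in> e" if "e \<in> all_edges V" "C e = a" for e
    using that a(2) unfolding all_edges_def by blast
  ultimately show thesis
    using that by blast
qed

lemma colour_of_cross_edge:
  assumes "\<not> has_rainbow_triangle (all_edges V) C"
    and private_colour: "\<And>e. e \<in> all_edges V \<Longrightarrow> C e = a \<Longrightarrow> v \<in> e"
    and "v \<in> V" "x \<in> V - {v}" "y \<in> V - {v}" "x \<noteq> y"
    and "C {v, x} = a" "C {v, y} \<noteq> a"
  shows "C {x, y} = C {v, y}"
proof (rule rainbow_free_triangle[OF assms(1)])
  have "C {x, y} \<noteq> a"
    using private_colour[of "{x, y}"] assms(4-6) by auto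
  with assms(7,8) show "C {v, x} \<noteq> C {x, y}" "C {v, x} \<noteq> C {v, y}"
    by auto
qed (use assms(3-6) in auto)

lemma extremal_remove_private_neighbours:
  assumes "finite V" "\<not> has_rainbow_triangle (all_edges V) C"
    and "card (C ` all_edges V) = card V - 1" and "v \<in> V"
    and private_colour: "\<And>e. e \<in> all_edges V \<Longrightarrow> C e = a \<Longrightarrow> v \<in> e"
  defines "A \<equiv> {x \<in> V - {v}. C {v, x} = a}"
  shows "card (C ` all_edges (V - A)) = card (V - A) - 1"
proof -
  define P where "P = insert v A"
  have parts: "P \<union> (V - A) = V" "P - (V - A) = A" "P \<subseteq> V" "A \<subseteq> V" "v \<notin> A"
    using assms(4) unfolding P_def A_def by auto
  have "\<forall>x\<in>P - (V - A). \<forall>y\<in>(V - A) - P. C {x, y} \<in> C ` all_edges (V - A)"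
  proof (intro ballI)
    fix x y assume "x \<in> P - (V - A)" "y \<in> (V - A) - P"
    then have "x \<in> A" "y \<in> V - {v}" "y \<notin> A"
      using assms(4) parts(5) unfolding P_def by auto
    then have "C {x, y} = C {v, y}"
      using colour_of_cross_edge[OF assms(2) private_colour assms(4)] unfolding A_def by auto
    moreover have "{v, y} \<in> all_edges (V - A)"
      using \<open>y \<in> V - {v}\<close> \<open>y \<notin> A\<close> assms(4) parts(5) by auto
    ultimately show "C {x, y} \<in> C ` all_edges (V - A)"
      by simp
  qed
  then have "C ` all_edges V \<subseteq> C ` all_edges P \<union> C ` all_edges (V - A) \<union> {}"
    using colours_Un_subset[of P "V - A" C "C ` all_edges (V - A)"] unfolding parts(1) by auto
  moreover have "card P + card (V - A) + card {} \<le> card V + 1"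
  proof -
    have "finite A" "card A < card V"
      using assms(1) parts(4,5) assms(4) by (auto intro: finite_subset psubset_card_mono)
    then show ?thesis
      using parts(4,5) assms(1) unfolding P_def by (simp add: card_Diff_subset)
  qed
  moreover have "P \<noteq> {}" "V - A \<noteq> {}"
    using assms(4) parts(5) unfolding P_def by auto
  ultimately show ?thesis
    using card_colours_tight_parts(2)[OF assms(1-3) parts(3) Diff_subset _ _ finite.emptyI] by blast
qed

text \<open>The cut is found by induction: a colour \<open>a\<close> private to \<open>v\<close> singles out the
  \<open>a\<close>-neighbours \<open>A\<close> of \<open>v\<close>; every edge from \<open>A\<close> to another vertex \<open>y \<noteq> v\<close> repeats the
  colour of \<open>{v, y}\<close>, so \<open>V - A\<close> is again extremal, and a cut of it with \<open>v\<close> on the first side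
  extends to \<open>V\<close> by adding \<open>A\<close> to that side.\<close>

lemma exists_monochromatic_cut:
  assumes "finite V" "2 \<le> card V" "\<not> has_rainbow_triangle (all_edges V) C"
    and "card (C ` all_edges V) = card V - 1" and "v \<in> V"
  shows "\<exists>V1 V2 c. V1 \<union> V2 = V \<and> V1 \<inter> V2 = {} \<and> v \<in> V1 \<and> V2 \<noteq> {} \<and>
    (\<forall>x\<in>V1. \<forall>y\<in>V2. C {x, y} = c)"
  using assms
proof (induction "card V" arbitrary: V rule: less_induct)
  case less
  obtain a where a: "a \<in> C ` all_edges V"
    and private_colour: "\<And>e. e \<in> all_edges V \<Longrightarrow> C e = a \<Longrightarrow> v \<in> e"
    using private_colour_exists[OF less.prems] by blast
  define A where "A = {x \<in> V - {v}. C {v, x} = a}"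
  have cross: "C {x, y} = C {v, y}" if "x \<in> A" "y \<in> V - A - {v}" for x y
    using that by (intro colour_of_cross_edge[OF less.prems(3) private_colour less.prems(5)])
      (auto simp: A_def)
  have "A \<noteq> {}"
  proof -
    obtain x y where "C {x, y} = a" "x \<noteq> y" "x \<in> V" "y \<in> V"
      using a by (auto elim!: all_edgesE)
    with private_colour[of "{x, y}"] have "x \<in> A \<or> y \<in> A"
      unfolding A_def by (auto simp: insert_commute)
    then show ?thesis
      by blast
  qed
  show ?case
  proof (cases "V - A = {v}")
    case True
    then have "{v} \<union> A = V" "{v} \<inter> A = {}"
      using less.prems(5) unfolding A_def by auto
    with \<open>A \<noteq> {}\<close> show ?thesis
      unfolding A_def by blast
  next
    case False
    have "v \<in> V - A" "finite (V - A)"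
      using less.prems(1,5) unfolding A_def by auto
    moreover have "{v} \<subset> V - A"
      using False \<open>v \<in> V - A\<close> by auto
    with \<open>finite (V - A)\<close> have "2 \<le> card (V - A)"
      using psubset_card_mono[of "V - A" "{v}"] by simp
    moreover have "card (V - A) < card V"
      using \<open>A \<noteq> {}\<close> less.prems(1) unfolding A_def by (intro psubset_card_mono) auto
    moreover have "card (C ` all_edges (V - A)) = card (V - A) - 1"
      unfolding A_def by (rule extremal_remove_private_neighbours[OF less.prems(1,3,4,5) private_colour])
    ultimately have "\<exists>U1 U2 c. U1 \<union> U2 = V - A \<and> U1 \<inter> U2 = {} \<and> v \<in> U1 \<and> U2 \<noteq> {} \<and>
      (\<forall>x\<in>U1. \<forall>y\<in>U2. C {x, y} = c)"
      using less.hyps[OF _ \<open>finite (V - A)\<close> _ rainbow_free_all_edges_subset[OF less.prems(3) Diff_subset]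
          _ \<open>v \<in> V - A\<close>] by blast
    then obtain U1 U2 c where U: "U1 \<union> U2 = V - A" "U1 \<inter> U2 = {}" "v \<in> U1" "U2 \<noteq> {}"
      "\<forall>x\<in>U1. \<forall>y\<in>U2. C {x, y} = c"
      by (elim exE conjE)
    have "U2 \<subseteq> V - A - {v}"
      using U(1-3) by blast
    have "U1 \<union> A \<union> U2 = V" "(U1 \<union> A) \<inter> U2 = {}"
      using U(1,2) unfolding A_def by blast+
    moreover have "\<forall>x\<in>U1 \<union> A. \<forall>y\<in>U2. C {x, y} = c"
      using U(3,5) cross \<open>U2 \<subseteq> V - A - {v}\<close> by fastforce
    ultimately show ?thesis
      using U(3,4) by (metis UnI1 sup_assoc)
  qed
qed

lemma G0_if_rainbow_free:
  assumes "finite V" "V \<noteq> {}" "\<not> has_rainbow_triangle (all_edges V) C"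
    and "card (C ` all_edges V) = card V - 1"
  shows "G0 V C"
  using assms
proof (induction "card V" arbitrary: V rule: less_induct)
  case less
  show ?case
  proof (cases "card V = 1")
    case True
    then obtain v where "V = {v}"
      by (auto simp: card_1_singleton_iff)
    then show ?thesis
      by (simp add: G0.single)
  next
    case False
    then have "2 \<le> card V"
      using less.prems(1,2) card_gt_0_iff[of V] by linarith
    obtain v where "v \<in> V"
      using less.prems(2) by blast
    obtain V1 V2 c where cut: "V1 \<union> V2 = V" "V1 \<inter> V2 = {}" "v \<in> V1" "V2 \<noteq> {}"
      "\<forall>x\<in>V1. \<forall>y\<in>V2. C {x, y} = c"
      using exists_monochromatic_cut[OF less.prems(1) \<open>2 \<le> card V\<close> less.prems(3,4) \<open>v \<in> V\<close>]
      by (elim exE conjE)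
    have parts: "V1 \<subseteq> V" "V2 \<subseteq> V" "V1 \<noteq> {}" "finite V1" "finite V2"
      using cut(1,3) less.prems(1) by auto
    have card_V: "card V = card V1 + card V2"
      using card_Un_disjoint[OF parts(4,5) cut(2)] cut(1) by simp
    have "C ` all_edges V \<subseteq> C ` all_edges V1 \<union> C ` all_edges V2 \<union> {c}"
      using colours_Un_subset[of V1 V2 C "{c}"] cut(1,2,5) by (simp add: Diff_triv Int_commute)
    with card_V have "card (C ` all_edges V1) = card V1 - 1" "card (C ` all_edges V2) = card V2 - 1"
      using card_colours_tight_parts[OF less.prems(1,3,4) parts(1-3) cut(4), where S = "{c}"]
      by simp_all
    moreover have "card V1 < card V" "card V2 < card V"
      using card_V parts(3-5) cut(4) by (simp_all add: card_gt_0_iff)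
    ultimately have "G0 V1 C" "G0 V2 C"
      using less.hyps parts(3-5) cut(4) rainbow_free_all_edges_subset[OF less.prems(3) parts(1)]
        rainbow_free_all_edges_subset[OF less.prems(3) parts(2)] by blast+
    moreover have "num_colors (all_edges V) C = card V - 1"
      using less.prems(4) unfolding num_colors_def .
    ultimately show ?thesis
      using G0.split[OF less.prems(1) \<open>2 \<le> card V\<close> _ cut(1,2) parts(3) cut(4)] cut(5) by blast
  qed
qed

theorem theorem2:
  fixes V :: "'a set" and E :: "'a set set" and C :: "'a set \<Rightarrow> nat"
  assumes "is_graph V E"
    and "card V \<ge> 1"
    and "card E + num_colors E C \<ge> (card V + 1 choose 2) - 1"
    and "\<not> has_rainbow_triangle E C"
  shows "E = all_edges V \<and> G0 V C"
proof -
  have "finite V" "V \<noteq> {}" "E \<subseteq> all_edges V"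
    using assms(1,2) unfolding is_graph_def by auto
  note bound = edges_plus_colours_bound[OF this assms(4), unfolded Suc_eq_plus1]
  have "1 \<le> card V + 1 choose 2"
    using assms(2) by (simp add: numeral_2_eq_2)
  then have extremal: "card E + card (C ` E) + 1 = card V + 1 choose 2"
    using bound assms(3) unfolding num_colors_def by linarith
  then have "E = all_edges V"
    using bound by simp
  moreover have "card (C ` all_edges V) = card V - 1"
    using extremal \<open>finite V\<close> \<open>E = all_edges V\<close> by (simp add: card_all_edges numeral_2_eq_2)
  ultimately show ?thesis
    using G0_if_rainbow_free \<open>finite V\<close> \<open>V \<noteq> {}\<close> assms(4) by blast
qed

end
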